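(* Let $N,K$ be positive integers, $X=\sum_{i=1}^NX_i$, and let $\psi$ be a unit vector on $N$ qubits supported on a set of at most $n_0$ computational basis states. Then $$\langle\psi|(X/N)^{2K}|\psi\rangle\le\prod_{i=0}^{K-1}\tau\Bigl(\frac{\log(n_0)+(i+1/2)\log(N)+1}{N}\Bigr)^2,$$ and consequently $$\bigl|(X/N)^K|\psi\rangle\bigr|\le\tau\Bigl(\frac{\log(n_0)}{N}+\frac{(K+1/2)\log(N)+1}{N}\Bigr)^K,$$ whenever the arguments of $\tau$ lie in $[0,1]$.
   Context: Logarithms are base 2. $S(x)=-x\log x-(1-x)\log(1-x)$ is the binary entropy function and $\tau(\sigma)=2\sqrt{S^{-1}(\sigma)(1-S^{-1}(\sigma))}$ for $\sigma\in[0,1]$ (the value does not depend on the choice of branch of $S^{-1}$); $\tau$ is continuous and increasing from $[0,1]$ onto $[0,1]$. *)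

theory Defs
  imports Complex_Main
begin

text \<open>Binary entropy, logarithms base 2 (note: in Isabelle log 2 0 = 0, so 0 log 0 = 0).\<close>
definition bin_entropy :: "real \<Rightarrow> real" where
  "bin_entropy x = - x * log 2 x - (1 - x) * log 2 (1 - x)"

definition bin_entropy_inv :: "real \<Rightarrow> real" where
  "bin_entropy_inv \<sigma> = (THE p. 0 \<le> p \<and> p \<le> 1/2 \<and> bin_entropy p = \<sigma>)"

definition tau :: "real \<Rightarrow> real" where
  "tau \<sigma> = 2 * sqrt (bin_entropy_inv \<sigma> * (1 - bin_entropy_inv \<sigma>))"

text \<open>States on N qubits: functions from computational basis states (bitstrings, encoded as
  subsets of {..<N}) to complex amplitudes; only values on Pow {..<N} matter.\<close>
type_synonym qstate = "nat set \<Rightarrow> complex"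

definition basis :: "nat \<Rightarrow> nat set set" where
  "basis N = Pow {..<N}"

text \<open>X = sum of Pauli X_i, X_i flips bit i.\<close>
definition Xop :: "nat \<Rightarrow> qstate \<Rightarrow> qstate" where
  "Xop N f = (\<lambda>S. \<Sum>i<N. f (S - {i} \<union> ({i} - S)))"

definition XN :: "nat \<Rightarrow> qstate \<Rightarrow> qstate" where
  "XN N f = (\<lambda>S. Xop N f S / of_nat N)"

definition qinner :: "nat \<Rightarrow> qstate \<Rightarrow> qstate \<Rightarrow> complex" where
  "qinner N f g = (\<Sum>S\<in>basis N. cnj (f S) * g S)"

definition qnorm :: "nat \<Rightarrow> qstate \<Rightarrow> real" where
  "qnorm N f = sqrt (\<Sum>S\<in>basis N. (cmod (f S))\<^sup>2)"

definition qsupport :: "nat \<Rightarrow> qstate \<Rightarrow> nat set set" where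
  "qsupport N f = {S \<in> basis N. f S \<noteq> 0}"

end

(* overlap q = 2 sqrt (q (1 - q)) is a concave function of the binary entropy h q, so it
   lies below the supporting line tau s + c (h q - s), c >= 0, at every s. Applied to the
   pairs of weights w(S)^2, w(S')^2, where S' is S with bit i flipped, and summed over S
   and i, this bounds <w, X w> by N tau(s) for a nonnegative unit vector w whose
   conditional entropies H(bit i | other bits) sum to at most N s bits; by Han's
   inequality it suffices that w^2 has entropy at most N s.
   If f >= 0 has fixed parity, then u = X f / |X f| and v = f / |f| have disjoint
   supports, and (u + v) / sqrt 2 has entropy at most 1 + (log |supp u| + log |supp v|) / 2;
   this gives |X f| <= N tau(s) |f|. As X enlarges supports at most N-fold, iteration gives
   |X^K f| <= prod_k N tau(sigma_k) |f| (for general f, split into even and odd parts).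
   Finally X^K psi is dominated entrywise by X^K |psi|, and <psi, X^(2K) psi> = |X^K psi|^2
   since X is self-adjoint. *)
theory Submission
  imports Defs "HOL-Real_Asymp.Real_Asymp"
begin

section \<open>Binary entropy\<close>

lemma continuous_on_x_ln: "continuous_on {0..} (\<lambda>x::real. x * ln x)"
proof -
  have "continuous (at x within {0..}) (\<lambda>x::real. x * ln x)" if "x \<in> {0..}" for x
  proof (cases "x = 0")
    case True
    have "((\<lambda>x::real. x * ln x) \<longlongrightarrow> 0) (at_right 0)" by real_asymp
    then show ?thesis
      using True by (simp add: continuous_within at_within_Ici_at_right)
  next
    case False
    with that have "isCont (\<lambda>x. x * ln x) x" by (auto intro!: continuous_intros)
    then show ?thesis using continuous_at_imp_continuous_at_within by blast
  qed
  then show ?thesis by (simp add: continuous_on_eq_continuous_within)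
qed

lemma bin_entropy_ln: "bin_entropy x = (- (x * ln x) - (1 - x) * ln (1 - x)) / ln 2"
  by (simp add: bin_entropy_def log_def field_simps)

lemma continuous_on_bin_entropy: "continuous_on {0..1} bin_entropy"
proof -
  have x_ln: "continuous_on {0..1} (\<lambda>x::real. x * ln x)"
    using continuous_on_x_ln by (rule continuous_on_subset) auto
  have one_minus_x_ln: "continuous_on {0..1} (\<lambda>x::real. (1 - x) * ln (1 - x))"
  proof (rule continuous_on_compose2[OF continuous_on_x_ln, of _ "\<lambda>x. 1 - x"])
    show "continuous_on {0..1} (\<lambda>x::real. 1 - x)" by (intro continuous_intros)
  qed auto
  show ?thesis
    unfolding bin_entropy_ln[abs_def] by (intro continuous_intros x_ln one_minus_x_ln) simp
qed

lemma bin_entropy_has_real_derivative: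
  assumes "0 < x" "x < 1"
  shows "(bin_entropy has_real_derivative (ln (1 - x) - ln x) / ln 2) (at x)"
proof -
  have "((\<lambda>x. (- (x * ln x) - (1 - x) * ln (1 - x)) / ln 2) has_real_derivative
       (- (ln x + x * (1 / x)) - (- ln (1 - x) + (1 - x) * (- 1 / (1 - x)))) / ln 2) (at x)"
    using assms by (auto intro!: derivative_eq_intros)
  also have "(- (ln x + x * (1 / x)) - (- ln (1 - x) + (1 - x) * (- 1 / (1 - x)))) / ln 2
      = (ln (1 - x) - ln x) / ln 2"
    using assms by (simp add: field_simps)
  finally show ?thesis unfolding bin_entropy_ln[abs_def] .
qed

lemma bin_entropy_0 [simp]: "bin_entropy 0 = 0"
  by (simp add: bin_entropy_def)

lemma bin_entropy_half: "bin_entropy (1/2) = 1"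
  by (simp add: bin_entropy_def log_divide)

lemma bin_entropy_one_minus: "bin_entropy (1 - x) = bin_entropy x"
  by (simp add: bin_entropy_def algebra_simps)

lemma bin_entropy_strict_mono:
  assumes "0 \<le> a" "a < b" "b \<le> 1/2"
  shows "bin_entropy a < bin_entropy b"
proof (rule DERIV_pos_imp_increasing_open[OF assms(2)])
  fix x assume "a < x" "x < b"
  with assms have "0 < x" "x < 1" "ln x < ln (1 - x)" by auto
  then show "\<exists>y. DERIV bin_entropy x :> y \<and> 0 < y"
    using bin_entropy_has_real_derivative by force
next
  show "continuous_on {a..b} bin_entropy"
    using continuous_on_bin_entropy by (rule continuous_on_subset) (use assms in auto)
qed

lemma bin_entropy_inv:
  assumes "0 \<le> s" "s \<le> 1"
  shows "0 \<le> bin_entropy_inv s" "bin_entropy_inv s \<le> 1/2" "bin_entropy (bin_entropy_inv s) = s"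
proof -
  have "continuous_on {0..1/2} bin_entropy"
    using continuous_on_bin_entropy by (rule continuous_on_subset) auto
  then have "\<exists>p. 0 \<le> p \<and> p \<le> 1/2 \<and> bin_entropy p = s"
    using IVT'[of bin_entropy 0 s "1/2"] assms bin_entropy_half by auto
  moreover have "p = p'"
    if "0 \<le> p \<and> p \<le> 1/2 \<and> bin_entropy p = s" "0 \<le> p' \<and> p' \<le> 1/2 \<and> bin_entropy p' = s"
    for p p'
    using bin_entropy_strict_mono[of p p'] bin_entropy_strict_mono[of p' p] that
    by (cases p p' rule: linorder_cases) auto
  ultimately have "\<exists>!p. 0 \<le> p \<and> p \<le> 1/2 \<and> bin_entropy p = s" by blast
  from theI'[OF this]
  show "0 \<le> bin_entropy_inv s" "bin_entropy_inv s \<le> 1/2" "bin_entropy (bin_entropy_inv s) = s"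
    unfolding bin_entropy_inv_def by auto
qed

lemma bin_entropy_inv_mono:
  assumes "0 \<le> s" "s \<le> t" "t \<le> 1"
  shows "bin_entropy_inv s \<le> bin_entropy_inv t"
proof (rule ccontr)
  assume "\<not> ?thesis"
  then have "bin_entropy_inv t < bin_entropy_inv s" by simp
  from bin_entropy_strict_mono[OF _ this] bin_entropy_inv[of s] bin_entropy_inv[of t] assms
  show False by auto
qed

lemma bin_entropy_inv_pos: "0 < s \<Longrightarrow> s \<le> 1 \<Longrightarrow> 0 < bin_entropy_inv s"
  using bin_entropy_inv[of s] by (cases "bin_entropy_inv s = 0") auto

lemma bin_entropy_inv_less_half: "0 \<le> s \<Longrightarrow> s < 1 \<Longrightarrow> bin_entropy_inv s < 1/2"
  using bin_entropy_inv[of s] bin_entropy_half by (cases "bin_entropy_inv s = 1/2") auto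

lemma bin_entropy_inv_1: "bin_entropy_inv 1 = 1/2"
proof (rule ccontr)
  assume "bin_entropy_inv 1 \<noteq> 1/2"
  with bin_entropy_inv[of 1] have "bin_entropy_inv 1 < 1/2" by simp
  from bin_entropy_strict_mono[OF _ this] bin_entropy_inv[of 1] bin_entropy_half show False by simp
qed

lemma tau_nonneg: "0 \<le> s \<Longrightarrow> s \<le> 1 \<Longrightarrow> 0 \<le> tau s"
  using bin_entropy_inv[of s] by (simp add: tau_def)

lemma tau_1: "tau 1 = 1"
  by (simp add: tau_def bin_entropy_inv_1 real_sqrt_divide)

lemma tau_mono:
  assumes "0 \<le> s" "s \<le> t" "t \<le> 1"
  shows "tau s \<le> tau t"
proof -
  define p q where "p = bin_entropy_inv s" and "q = bin_entropy_inv t"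
  have "0 \<le> p" "p \<le> q" "q \<le> 1/2"
    using bin_entropy_inv[of s] bin_entropy_inv[of t] bin_entropy_inv_mono[OF assms] assms
    by (auto simp: p_def q_def)
  moreover have "q * (1 - q) - p * (1 - p) = (q - p) * (1 - p - q)"
    by (simp add: algebra_simps)
  ultimately have "p * (1 - p) \<le> q * (1 - q)"
    using mult_nonneg_nonneg[of "q - p" "1 - p - q"] by linarith
  then show ?thesis by (simp add: tau_def p_def q_def)
qed

section \<open>A supporting line of tau\<close>

definition overlap :: "real \<Rightarrow> real" where
  "overlap q = 2 * sqrt (q * (1 - q))"

lemma tau_eq_overlap: "tau s = overlap (bin_entropy_inv s)"
  by (simp add: tau_def overlap_def)

lemma overlap_one_minus: "overlap (1 - q) = overlap q"
  by (simp add: overlap_def mult.commute)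

lemma overlap_le_1: "overlap q \<le> 1"
proof -
  have "q * (1 - q) \<le> (1/2)^2"
    using zero_le_power2[of "q - 1/2"] by (simp add: power2_eq_square algebra_simps)
  then have "sqrt (q * (1 - q)) \<le> 1/2"
    using real_sqrt_le_mono by fastforce
  then show ?thesis by (simp add: overlap_def)
qed

lemma overlap_has_real_derivative:
  assumes "0 < q" "q < 1"
  shows "(overlap has_real_derivative (1 - 2 * q) / sqrt (q * (1 - q))) (at q)"
proof -
  have "0 < q * (1 - q)" using assms by simp
  then have "(overlap has_real_derivative 2 * (inverse (sqrt (q * (1 - q))) / 2 * (1 - q - q))) (at q)"
    unfolding overlap_def[abs_def] by (auto intro!: derivative_eq_intros)
  moreover have "2 * (inverse r / 2 * (1 - q - q)) = (1 - 2 * q) / r" for r :: real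
    by (cases "r = 0") (simp_all add: field_simps)
  ultimately show ?thesis by simp
qed

lemma two_mult_diff_div_le_ln:
  fixes y :: real
  assumes "1 \<le> y"
  shows "2 * (y - 1) / (y + 1) \<le> ln y"
proof -
  let ?f = "\<lambda>t::real. ln t - 2 * (t - 1) / (t + 1)"
  have "?f 1 \<le> ?f y"
  proof (rule DERIV_nonneg_imp_increasing_open[OF assms])
    fix x :: real assume x: "1 < x" "x < y"
    have "(?f has_real_derivative 1 / x - (2 * (x + 1) - 2 * (x - 1)) / (x + 1)^2) (at x)"
      using x by (auto intro!: derivative_eq_intros simp: power2_eq_square)
    moreover have "1 / x - (2 * (x + 1) - 2 * (x - 1)) / (x + 1)^2 = (x - 1)^2 / (x * (x + 1)^2)"
      using x by (simp add: divide_simps) (simp add: algebra_simps power2_eq_square)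
    moreover have "0 \<le> (x - 1)^2 / (x * (x + 1)^2)" using x by auto
    ultimately show "\<exists>d. (?f has_real_derivative d) (at x) \<and> 0 \<le> d" by metis
  qed (use assms in \<open>auto intro!: continuous_intros\<close>)
  then show ?thesis by simp
qed

text \<open>For \<open>x = exp t\<close> this is \<open>2 sinh t / t\<close>.\<close>
definition sinh_ratio :: "real \<Rightarrow> real" where
  "sinh_ratio x = (x - 1 / x) / ln x"

lemma sinh_ratio_mono:
  assumes "1 < a" "a \<le> b"
  shows "sinh_ratio a \<le> sinh_ratio b"
  unfolding sinh_ratio_def
proof (rule DERIV_nonneg_imp_increasing_open[OF assms(2)])
  fix x :: real assume "a < x" "x < b"
  then have x: "1 < x" using assms by simp
  then have ln_pos: "0 < ln x" by simp
  have "((\<lambda>x. (x - 1 / x) / ln x) has_real_derivative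
      ((1 + 1 / x^2) * ln x - (x - 1 / x) / x) / (ln x)^2) (at x)"
    using x ln_pos by (auto intro!: derivative_eq_intros simp: field_simps power2_eq_square)
  moreover have "0 \<le> (1 + 1 / x^2) * ln x - (x - 1 / x) / x"
  proof -
    have "2 * (x^2 - 1) / (x^2 + 1) \<le> 2 * ln x"
      using two_mult_diff_div_le_ln[of "x^2"] x by (simp add: ln_realpow one_le_power)
    moreover have "0 < x^2 + 1" using zero_le_power2[of x] by linarith
    ultimately have "x^2 - 1 \<le> ln x * (x^2 + 1)"
      by (simp add: divide_le_eq mult.commute)
    then have "(x^2 - 1) / x^2 \<le> ln x * (x^2 + 1) / x^2"
      by (simp add: divide_right_mono)
    then show ?thesis
      using x by (simp add: field_simps power2_eq_square)
  qed
  ultimately show "\<exists>y. ((\<lambda>x. (x - 1 / x) / ln x) has_real_derivative y) (at x) \<and> 0 \<le> y"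
    by auto
qed (use assms in \<open>auto intro!: continuous_intros\<close>)

definition odds_root :: "real \<Rightarrow> real" where
  "odds_root q = sqrt ((1 - q) / q)"

lemma one_less_odds_root: "0 < q \<Longrightarrow> q < 1/2 \<Longrightarrow> 1 < odds_root q"
  by (simp add: odds_root_def field_simps)

lemma odds_root_antimono: "0 < q \<Longrightarrow> q \<le> q' \<Longrightarrow> odds_root q' \<le> odds_root q"
proof -
  assume "0 < q" "q \<le> q'"
  then have "(1 - q') / q' = 1 / q' - 1" "(1 - q) / q = 1 / q - 1" "1 / q' \<le> 1 / q"
    by (auto simp: field_simps frac_le)
  then show ?thesis by (simp add: odds_root_def)
qed

lemma overlap_bin_entropy_slopes:
  assumes "0 < q" "q < 1/2"
  defines "x \<equiv> odds_root q"
  shows "(1 - 2 * q) / sqrt (q * (1 - q)) = sinh_ratio x * ln x"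
    and "(ln (1 - q) - ln q) / ln 2 = 2 * ln x / ln 2"
proof -
  have x: "1 < x" using one_less_odds_root assms by simp
  define a b where "a = sqrt q" and "b = sqrt (1 - q)"
  have ab: "0 < a" "0 < b" "a^2 = q" "b^2 = 1 - q"
    using assms by (auto simp: a_def b_def)
  have "sinh_ratio x * ln x = x - 1 / x"
    using x by (simp add: sinh_ratio_def)
  also have "\<dots> = b / a - a / b"
    by (simp add: x_def odds_root_def a_def b_def real_sqrt_divide)
  also have "\<dots> = (b^2 - a^2) / (a * b)"
    using ab by (simp add: field_simps power2_eq_square)
  also have "\<dots> = (1 - 2 * q) / sqrt (q * (1 - q))"
    using ab by (simp add: a_def b_def real_sqrt_mult)
  finally show "(1 - 2 * q) / sqrt (q * (1 - q)) = sinh_ratio x * ln x" ..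
  have "ln x = (ln (1 - q) - ln q) / 2"
    using x assms by (simp add: x_def odds_root_def ln_sqrt ln_div)
  then show "(ln (1 - q) - ln q) / ln 2 = 2 * ln x / ln 2" by simp
qed

lemma overlap_minus_bin_entropy_has_real_derivative:
  assumes "0 < q" "q < 1/2"
  shows "((\<lambda>q. overlap q - c * bin_entropy q) has_real_derivative
    ln (odds_root q) * (sinh_ratio (odds_root q) - 2 * c / ln 2)) (at q)"
proof -
  have "((\<lambda>q. overlap q - c * bin_entropy q) has_real_derivative
      (1 - 2 * q) / sqrt (q * (1 - q)) - c * ((ln (1 - q) - ln q) / ln 2)) (at q)"
    using assms
    by (intro DERIV_diff DERIV_cmult overlap_has_real_derivative bin_entropy_has_real_derivative)
      auto
  then show ?thesis
    using overlap_bin_entropy_slopes[OF assms] by (simp add: algebra_simps)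
qed

text \<open>The slope of \<open>overlap\<close> divided by that of \<open>bin_entropy\<close> at \<open>q\<close> is
  \<open>ln 2 / 2 * sinh_ratio (odds_root q)\<close>, which decreases in \<open>q\<close>: \<open>overlap\<close> is a concave
  function of \<open>bin_entropy\<close> on \<open>[0, 1/2]\<close>.\<close>
lemma overlap_le_tangent_half:
  assumes p: "0 < p" "p < 1/2" and q: "0 \<le> q" "q \<le> 1/2"
  defines "c \<equiv> sinh_ratio (odds_root p) * ln 2 / 2"
  shows "overlap q - c * bin_entropy q \<le> overlap p - c * bin_entropy p"
proof -
  define F where "F q = overlap q - c * bin_entropy q" for q
  have F_deriv: "(F has_real_derivative
      ln (odds_root y) * (sinh_ratio (odds_root y) - sinh_ratio (odds_root p))) (at y)"
    if "0 < y" "y < 1/2" for y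
    using overlap_minus_bin_entropy_has_real_derivative[OF that, of c]
    by (simp add: F_def[abs_def] c_def)
  have ln_pos: "0 < ln (odds_root y)" if "0 < y" "y < 1/2" for y
    using one_less_odds_root[OF that] by simp
  have F_cont: "continuous_on {a..b} F" if "0 \<le> a" "b \<le> 1" for a b
    unfolding F_def[abs_def] overlap_def
    by (intro continuous_intros continuous_on_subset[OF continuous_on_bin_entropy]) (use that in auto)
  show ?thesis
  proof (cases "q \<le> p")
    case True
    show ?thesis unfolding F_def[symmetric]
    proof (rule DERIV_nonneg_imp_increasing_open[OF True _ F_cont])
      fix y assume "q < y" "y < p"
      with p q have "0 < y" "y < 1/2" "sinh_ratio (odds_root p) \<le> sinh_ratio (odds_root y)"
        using sinh_ratio_mono one_less_odds_root odds_root_antimono by auto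
      with F_deriv ln_pos show "\<exists>d. (F has_real_derivative d) (at y) \<and> 0 \<le> d" by force
    qed (use p q in auto)
  next
    case False
    show ?thesis unfolding F_def[symmetric]
    proof (rule DERIV_nonpos_imp_decreasing_open[of p q, OF _ _ F_cont])
      fix y assume "p < y" "y < q"
      with p q have "0 < y" "y < 1/2" "sinh_ratio (odds_root y) \<le> sinh_ratio (odds_root p)"
        using sinh_ratio_mono one_less_odds_root odds_root_antimono by auto
      with F_deriv ln_pos show "\<exists>d. (F has_real_derivative d) (at y) \<and> d \<le> 0"
        by (force simp: mult_le_0_iff)
    qed (use p q False in auto)
  qed
qed

lemma overlap_le_tangent:
  assumes p: "0 < p" "p < 1/2"
  shows "\<exists>c\<ge>0. \<forall>q\<in>{0..1}. overlap q \<le> overlap p + c * (bin_entropy q - bin_entropy p)"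
proof -
  define c where "c = sinh_ratio (odds_root p) * ln 2 / 2"
  have "1 < odds_root p" using one_less_odds_root p by simp
  then have "1 / odds_root p < 1" by simp
  with \<open>1 < odds_root p\<close> have "1 / odds_root p \<le> odds_root p" by linarith
  with \<open>1 < odds_root p\<close> have "0 \<le> c"
    unfolding c_def sinh_ratio_def by (intro divide_nonneg_nonneg mult_nonneg_nonneg) auto
  have "overlap q - c * bin_entropy q \<le> overlap p - c * bin_entropy p" if "0 \<le> q" "q \<le> 1" for q
  proof (cases "q \<le> 1/2")
    case True
    with that show ?thesis using overlap_le_tangent_half[OF p] by (simp add: c_def)
  next
    case False
    with that overlap_le_tangent_half[OF p, of "1 - q"] show ?thesis
      by (simp add: c_def overlap_one_minus bin_entropy_one_minus)
  qed
  with \<open>0 \<le> c\<close> show ?thesis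
    by (intro exI[of _ c]) (auto simp: algebra_simps)
qed

lemma tau_supporting_line:
  assumes "0 < s" "s \<le> 1"
  shows "\<exists>c\<ge>0. \<forall>q\<in>{0..1}. overlap q \<le> tau s + c * (bin_entropy q - s)"
proof (cases "s = 1")
  case True
  then show ?thesis using overlap_le_1 tau_1 by (intro exI[of _ 0]) auto
next
  case False
  then have "0 < bin_entropy_inv s" "bin_entropy_inv s < 1/2"
    using bin_entropy_inv_pos bin_entropy_inv_less_half assms by auto
  from overlap_le_tangent[OF this] show ?thesis
    using bin_entropy_inv(3) assms by (simp add: tau_eq_overlap)
qed

lemma scaled_overlap:
  assumes "0 \<le> x" "0 \<le> y"
  shows "(x + y) * overlap (x / (x + y)) = 2 * sqrt (x * y)"
proof (cases "x + y = 0")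
  case False
  then have "x / (x + y) * (1 - x / (x + y)) = (sqrt (x * y) / (x + y))^2"
    using assms by (simp add: field_simps power2_eq_square)
  then show ?thesis
    using assms False by (simp add: overlap_def add_nonneg_nonneg)
qed (use assms in \<open>simp add: add_nonneg_eq_0_iff\<close>)

lemma scaled_bin_entropy:
  assumes "0 \<le> x" "0 \<le> y"
  shows "(x + y) * bin_entropy (x / (x + y))
    = (x * ln ((x + y) / x) + y * ln ((x + y) / y)) / ln 2"
proof (cases "x + y = 0")
  case False
  have scaled_term: "(x + y) * (- (z / (x + y)) * log 2 (z / (x + y))) = z * ln ((x + y) / z) / ln 2"
    if "0 \<le> z" for z
  proof (cases "z = 0")
    case False
    with that assms \<open>x + y \<noteq> 0\<close> have "0 < z" "0 < x + y" by auto
    then have "log 2 (z / (x + y)) = - ln ((x + y) / z) / ln 2"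
      by (simp add: log_def ln_div)
    then show ?thesis using \<open>0 < x + y\<close> by simp
  qed simp
  have one_minus: "1 - x / (x + y) = y / (x + y)"
    using False by (simp add: field_simps)
  have "(x + y) * bin_entropy (x / (x + y))
      = (x + y) * (- (x / (x + y)) * log 2 (x / (x + y)))
        + (x + y) * (- (y / (x + y)) * log 2 (y / (x + y)))"
    unfolding bin_entropy_def one_minus by (simp add: algebra_simps)
  also have "\<dots> = x * ln ((x + y) / x) / ln 2 + y * ln ((x + y) / y) / ln 2"
    by (simp only: scaled_term[OF assms(1)] scaled_term[OF assms(2)])
  finally show ?thesis by (simp add: add_divide_distrib)
qed (use assms in \<open>simp add: add_nonneg_eq_0_iff\<close>)

lemma two_sqrt_mult_le_tangent:
  assumes "0 \<le> x" "0 \<le> y" "0 \<le> c"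
    and tangent: "\<forall>q\<in>{0..1}. overlap q \<le> t + c * (bin_entropy q - s)"
  shows "2 * sqrt (x * y)
    \<le> (x + y) * t + c * ((x * ln ((x + y) / x) + y * ln ((x + y) / y)) / ln 2 - (x + y) * s)"
proof (cases "x + y = 0")
  case False
  then have "0 < x + y" using assms by simp
  then have "x / (x + y) \<in> {0..1}" using assms by simp
  have "2 * sqrt (x * y) = (x + y) * overlap (x / (x + y))"
    using assms by (simp add: scaled_overlap)
  also have "\<dots> \<le> (x + y) * (t + c * (bin_entropy (x / (x + y)) - s))"
    using tangent \<open>x / (x + y) \<in> {0..1}\<close> \<open>0 < x + y\<close> by (intro mult_left_mono) auto
  also have "\<dots> = (x + y) * t + c * ((x + y) * bin_entropy (x / (x + y)) - (x + y) * s)"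
    by (simp add: algebra_simps)
  also have "(x + y) * bin_entropy (x / (x + y))
      = (x * ln ((x + y) / x) + y * ln ((x + y) / y)) / ln 2"
    by (rule scaled_bin_entropy[OF assms(1,2)])
  finally show ?thesis .
qed (use assms in \<open>simp add: add_nonneg_eq_0_iff\<close>)

section \<open>Entropy of weights on the hypercube\<close>

definition flip :: "nat \<Rightarrow> nat set \<Rightarrow> nat set" where
  "flip i S = S - {i} \<union> ({i} - S)"

lemma flip_eq: "flip i S = (if i \<in> S then S - {i} else insert i S)"
  by (auto simp: flip_def)

lemma flip_flip [simp]: "flip i (flip i S) = S"
  by (auto simp: flip_eq)

lemma flip_in_Pow: "i \<in> I \<Longrightarrow> S \<in> Pow I \<Longrightarrow> flip i S \<in> Pow I"
  by (auto simp: flip_eq)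

lemma flip_insert: "i \<noteq> j \<Longrightarrow> flip i (insert j S) = insert j (flip i S)"
  by (auto simp: flip_eq)

lemma even_card_flip:
  assumes "finite S"
  shows "even (card (flip i S)) \<longleftrightarrow> odd (card S)"
proof (cases "i \<in> S")
  case True
  then have "card S = Suc (card (flip i S))"
    using card_Suc_Diff1[OF assms True] by (simp only: flip_eq if_True)
  then show ?thesis by simp
qed (use assms in \<open>simp add: flip_eq\<close>)

lemma sum_Pow_flip: "i \<in> I \<Longrightarrow> (\<Sum>S\<in>Pow I. f (flip i S)) = (\<Sum>S\<in>Pow I. f S)"
  by (rule sum.reindex_bij_witness[where i="flip i" and j="flip i"]) (use flip_in_Pow in auto)

lemma sum_Pow_insert:
  assumes "finite I" "j \<notin> I"
  shows "(\<Sum>S\<in>Pow (insert j I). f S) = (\<Sum>T\<in>Pow I. f T + f (insert j T))"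
proof -
  have "inj_on (insert j) (Pow I)"
    by (rule inj_onI) (use assms in \<open>auto simp: insert_ident\<close>)
  moreover have "Pow I \<inter> insert j ` Pow I = {}" using assms by auto
  ultimately show ?thesis
    using assms by (simp add: Pow_insert sum.union_disjoint sum.reindex sum.distrib)
qed

lemma mult_ln_div_le:
  fixes x y t :: real
  assumes "0 \<le> x" "0 \<le> y" "0 < x \<Longrightarrow> 0 < y" "0 < t"
  shows "x * ln (y / x) \<le> x * ln t + y / t - x"
proof (cases "x = 0")
  case False
  with assms have "0 < x" "0 < y" by auto
  then have "ln (y / (x * t)) \<le> y / (x * t) - 1"
    using assms by (intro ln_le_minus_one) simp
  then have "x * ln (y / (x * t)) \<le> x * (y / (x * t) - 1)"
    using \<open>0 < x\<close> by (simp add: mult_left_mono)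
  moreover have "ln (y / (x * t)) = ln (y / x) - ln t"
    using \<open>0 < x\<close> \<open>0 < y\<close> assms by (simp add: ln_div ln_mult)
  moreover have "x * (y / (x * t) - 1) = y / t - x"
    using \<open>0 < x\<close> by (simp add: field_simps)
  ultimately show ?thesis by (simp add: right_diff_distrib)
qed (use assms in simp)

lemma log_sum_inequality2:
  fixes a b c d :: real
  assumes "0 \<le> a" "a \<le> b" "0 \<le> c" "c \<le> d"
  shows "a * ln (b / a) + c * ln (d / c) \<le> (a + c) * ln ((b + d) / (a + c))"
proof (cases "a + c = 0")
  case False
  define t where "t = (b + d) / (a + c)"
  have "0 < a + c" "0 < t" using assms False by (auto simp: t_def)
  have "a * ln (b / a) + c * ln (d / c) \<le> (a * ln t + b / t - a) + (c * ln t + d / t - c)"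
    using assms \<open>0 < t\<close> by (intro add_mono mult_ln_div_le) auto
  also have "\<dots> = (a + c) * ln t + (b + d) / t - (a + c)"
    by (simp add: algebra_simps add_divide_distrib)
  also have "(b + d) / t = a + c"
    using \<open>0 < a + c\<close> assms by (simp add: t_def)
  finally show ?thesis by (simp add: t_def)
qed (use assms in \<open>simp add: add_nonneg_eq_0_iff\<close>)

text \<open>Entropies, in nats, of nonnegative (not necessarily normalised) weights \<open>P\<close> on the
  subsets of \<open>I\<close>; \<open>cond_entropy I i P\<close> is the entropy of coordinate \<open>i\<close> given all the others.\<close>
definition entropy :: "nat set \<Rightarrow> (nat set \<Rightarrow> real) \<Rightarrow> real" where
  "entropy I P = (\<Sum>S\<in>Pow I. P S) * ln (\<Sum>S\<in>Pow I. P S) - (\<Sum>S\<in>Pow I. P S * ln (P S))"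

definition cond_entropy :: "nat set \<Rightarrow> nat \<Rightarrow> (nat set \<Rightarrow> real) \<Rightarrow> real" where
  "cond_entropy I i P = (\<Sum>S\<in>Pow I. P S * ln ((P S + P (flip i S)) / P S))"

lemma entropy_cong:
  assumes "\<And>S. S \<in> Pow I \<Longrightarrow> P S = Q S"
  shows "entropy I P = entropy I Q"
proof -
  have "sum P (Pow I) = sum Q (Pow I)" "(\<Sum>S\<in>Pow I. P S * ln (P S)) = (\<Sum>S\<in>Pow I. Q S * ln (Q S))"
    using assms by (auto intro: sum.cong)
  then show ?thesis by (simp add: entropy_def)
qed

lemma mult_ln_div_add:
  fixes x y :: real
  assumes "0 \<le> x" "0 \<le> y"
  shows "x * ln ((x + y) / x) = x * ln (x + y) - x * ln x"
  using assms by (cases "x = 0") (auto simp: ln_div algebra_simps)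

lemma entropy_insert:
  assumes "finite I" "j \<notin> I" "\<And>S. 0 \<le> P S"
  shows "entropy (insert j I) P
    = entropy I (\<lambda>T. P T + P (insert j T)) + cond_entropy (insert j I) j P"
proof -
  have flip_j: "flip j T = insert j T" "flip j (insert j T) = T" if "T \<in> Pow I" for T
    using that assms(2) by (auto simp: flip_eq)
  have "cond_entropy (insert j I) j P
      = (\<Sum>T\<in>Pow I. (P T + P (insert j T)) * ln (P T + P (insert j T))
                     - P T * ln (P T) - P (insert j T) * ln (P (insert j T)))"
    unfolding cond_entropy_def sum_Pow_insert[OF assms(1,2)]
  proof (intro sum.cong refl)
    fix T assume "T \<in> Pow I"
    with mult_ln_div_add[of "P T" "P (insert j T)"] mult_ln_div_add[of "P (insert j T)" "P T"] assms(3)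
    show "P T * ln ((P T + P (flip j T)) / P T)
        + P (insert j T) * ln ((P (insert j T) + P (flip j (insert j T))) / P (insert j T))
      = (P T + P (insert j T)) * ln (P T + P (insert j T))
        - P T * ln (P T) - P (insert j T) * ln (P (insert j T))"
      by (simp add: flip_j add.commute algebra_simps)
  qed
  then show ?thesis
    by (simp add: entropy_def sum_Pow_insert[OF assms(1,2)] sum_subtractf sum.distrib)
qed

lemma cond_entropy_insert_le:
  assumes "finite I" "j \<notin> I" "i \<in> I" "\<And>S. 0 \<le> P S"
  shows "cond_entropy (insert j I) i P \<le> cond_entropy I i (\<lambda>T. P T + P (insert j T))"
proof -
  have "i \<noteq> j" using assms(2,3) by auto
  have "cond_entropy (insert j I) i P
      = (\<Sum>T\<in>Pow I. P T * ln ((P T + P (flip i T)) / P T)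
          + P (insert j T) * ln ((P (insert j T) + P (insert j (flip i T))) / P (insert j T)))"
    unfolding cond_entropy_def sum_Pow_insert[OF assms(1,2)] using \<open>i \<noteq> j\<close> by (simp add: flip_insert)
  also have "\<dots> \<le> cond_entropy I i (\<lambda>T. P T + P (insert j T))"
    unfolding cond_entropy_def
    by (intro sum_mono order_trans[OF log_sum_inequality2]) (simp_all add: assms(4) algebra_simps)
  finally show ?thesis .
qed

text \<open>Removing a coordinate \<open>j\<close> merges the weights of \<open>T\<close> and \<open>insert j T\<close>;
  by the log-sum inequality this can only increase the other conditional entropies.\<close>
lemma sum_cond_entropy_le_entropy:
  assumes "finite I" "\<And>S. 0 \<le> P S"
  shows "(\<Sum>i\<in>I. cond_entropy I i P) \<le> entropy I P"
  using assms
proof (induction I arbitrary: P rule: finite_induct)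
  case empty
  then show ?case by (simp add: entropy_def)
next
  case (insert j I)
  define P' where "P' = (\<lambda>T. P T + P (insert j T))"
  have "(\<Sum>i\<in>insert j I. cond_entropy (insert j I) i P)
      = (\<Sum>i\<in>I. cond_entropy (insert j I) i P) + cond_entropy (insert j I) j P"
    using insert.hyps by (simp add: add.commute)
  also have "\<dots> \<le> (\<Sum>i\<in>I. cond_entropy I i P') + cond_entropy (insert j I) j P"
    unfolding P'_def
    by (intro add_right_mono sum_mono cond_entropy_insert_le) (use insert in auto)
  also have "\<dots> \<le> entropy I P' + cond_entropy (insert j I) j P"
    by (intro add_right_mono insert.IH) (simp add: P'_def insert.prems)
  also have "\<dots> = entropy (insert j I) P"
    unfolding P'_def by (rule entropy_insert[symmetric]) (use insert in auto)
  finally show ?case .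
qed

lemma entropy_le_cross_entropy:
  assumes "finite I" "\<And>S. S \<in> Pow I \<Longrightarrow> 0 \<le> P S" "(\<Sum>S\<in>Pow I. P S) = 1"
    and "\<And>S. S \<in> Pow I \<Longrightarrow> 0 \<le> Q S" "(\<Sum>S\<in>Pow I. Q S) \<le> 1"
    and "\<And>S. S \<in> Pow I \<Longrightarrow> 0 < P S \<Longrightarrow> 0 < Q S"
  shows "entropy I P \<le> - (\<Sum>S\<in>Pow I. P S * ln (Q S))"
proof -
  have "P S * ln (Q S) - P S * ln (P S) \<le> Q S - P S" if "S \<in> Pow I" for S
  proof (cases "P S = 0")
    case False
    with assms that have "0 < P S" "0 < Q S" by (auto simp: order_less_le)
    then have "P S * ln (Q S) - P S * ln (P S) = P S * ln (Q S / P S)"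
      by (simp add: ln_div right_diff_distrib)
    also have "\<dots> \<le> Q S - P S"
      using mult_ln_div_le[of "P S" "Q S" 1] \<open>0 < P S\<close> \<open>0 < Q S\<close> by simp
    finally show ?thesis .
  qed (use assms that in simp)
  then have "(\<Sum>S\<in>Pow I. P S * ln (Q S) - P S * ln (P S)) \<le> (\<Sum>S\<in>Pow I. Q S - P S)"
    by (rule sum_mono)
  then show ?thesis
    using assms(3,5) by (simp add: entropy_def sum_subtractf)
qed

section \<open>The operator X on nonnegative real vectors\<close>

definition Xop_real :: "nat \<Rightarrow> (nat set \<Rightarrow> real) \<Rightarrow> nat set \<Rightarrow> real" where
  "Xop_real N f S = (\<Sum>i<N. f (flip i S))"

definition sqnorm :: "nat \<Rightarrow> (nat set \<Rightarrow> real) \<Rightarrow> real" where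
  "sqnorm N f = (\<Sum>S\<in>Pow {..<N}. (f S)^2)"

definition rsupport :: "nat \<Rightarrow> (nat set \<Rightarrow> real) \<Rightarrow> nat set set" where
  "rsupport N f = {S\<in>Pow {..<N}. f S \<noteq> 0}"

lemma finite_rsupport [simp]: "finite (rsupport N f)"
  by (simp add: rsupport_def)

lemma rsupport_power2 [simp]: "rsupport N (\<lambda>S. (f S)^2) = rsupport N f"
  by (simp add: rsupport_def)

lemma flip_subset_lessThan [simp]: "i < N \<Longrightarrow> S \<subseteq> {..<N} \<Longrightarrow> flip i S \<subseteq> {..<N}"
  using flip_in_Pow[of i "{..<N}" S] by simp

lemma sqnorm_nonneg: "0 \<le> sqnorm N f"
  by (simp add: sqnorm_def sum_nonneg)

lemma sqnorm_eq_0_iff: "sqnorm N f = 0 \<longleftrightarrow> (\<forall>S\<in>Pow {..<N}. f S = 0)"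
  by (simp add: sqnorm_def sum_nonneg_eq_0_iff)

lemma sqnorm_divide: "sqnorm N (\<lambda>S. f S / c) = sqnorm N f / c^2"
  by (simp add: sqnorm_def power_divide sum_divide_distrib)

lemma rsupport_divide: "c \<noteq> 0 \<Longrightarrow> rsupport N (\<lambda>S. f S / c) = rsupport N f"
  by (simp add: rsupport_def)

lemma card_rsupport_pos:
  assumes "(\<Sum>S\<in>Pow {..<N}. P S) = 1"
  shows "0 < card (rsupport N P)"
proof (rule ccontr)
  assume "\<not> 0 < card (rsupport N P)"
  then have "\<forall>S\<in>Pow {..<N}. P S = 0" by (auto simp: rsupport_def)
  with assms show False by simp
qed

lemma sum_if_rsupport:
  "(\<Sum>S\<in>Pow {..<N}. if P S \<noteq> 0 then r else 0) = real (card (rsupport N P)) * r"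
  by (simp add: sum.If_cases rsupport_def Int_def conj_commute)

lemma Xop_real_add: "Xop_real N (\<lambda>S. f S + g S) S = Xop_real N f S + Xop_real N g S"
  by (simp add: Xop_real_def sum.distrib)

lemma Xop_real_divide: "Xop_real N (\<lambda>S. f S / c) S = Xop_real N f S / c"
  by (simp add: Xop_real_def sum_divide_distrib)

lemma Xop_real_nonneg: "(\<And>S. 0 \<le> f S) \<Longrightarrow> 0 \<le> Xop_real N f S"
  by (simp add: Xop_real_def sum_nonneg)

lemma sum_mult_Xop_real:
  "(\<Sum>S\<in>Pow {..<N}. u S * Xop_real N v S) = (\<Sum>i<N. \<Sum>S\<in>Pow {..<N}. u S * v (flip i S))"
  by (simp add: Xop_real_def sum_distrib_left sum.swap[of _ "{..<N}"])

lemma Xop_real_symmetric: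
  "(\<Sum>S\<in>Pow {..<N}. u S * Xop_real N v S) = (\<Sum>S\<in>Pow {..<N}. Xop_real N u S * v S)"
proof -
  have "(\<Sum>S\<in>Pow {..<N}. u S * Xop_real N v S) = (\<Sum>i<N. \<Sum>S\<in>Pow {..<N}. u S * v (flip i S))"
    by (rule sum_mult_Xop_real)
  also have "\<dots> = (\<Sum>i<N. \<Sum>S\<in>Pow {..<N}. u (flip i S) * v S)"
  proof (rule sum.cong[OF refl])
    fix i assume "i \<in> {..<N}"
    then show "(\<Sum>S\<in>Pow {..<N}. u S * v (flip i S)) = (\<Sum>S\<in>Pow {..<N}. u (flip i S) * v S)"
      using sum_Pow_flip[of i "{..<N}" "\<lambda>S. u (flip i S) * v S"] by simp
  qed
  also have "\<dots> = (\<Sum>S\<in>Pow {..<N}. Xop_real N u S * v S)"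
    by (simp add: Xop_real_def sum_distrib_right sum.swap[of _ "{..<N}"])
  finally show ?thesis .
qed

lemma sum_mult_flip_le_tangent:
  assumes w: "\<And>S. 0 \<le> w S" "sqnorm N w = 1" and "i < N" "0 \<le> c"
    and tangent: "\<forall>q\<in>{0..1}. overlap q \<le> t + c * (bin_entropy q - s)"
  shows "(\<Sum>S\<in>Pow {..<N}. w S * w (flip i S))
    \<le> t + c * (cond_entropy {..<N} i (\<lambda>S. (w S)^2) / ln 2 - s)"
proof -
  define P where "P = (\<lambda>S. (w S)^2)"
  define A where "A S = P S * ln ((P S + P (flip i S)) / P S)" for S
  have sum_P: "(\<Sum>S\<in>Pow {..<N}. P S + P (flip i S)) = 2"
    using w(2) sum_Pow_flip[of i "{..<N}" P] \<open>i < N\<close> by (simp add: sum.distrib sqnorm_def P_def)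
  have sum_A: "(\<Sum>S\<in>Pow {..<N}. A S + A (flip i S)) = 2 * cond_entropy {..<N} i P"
    using sum_Pow_flip[of i "{..<N}" A] \<open>i < N\<close> by (simp add: sum.distrib cond_entropy_def A_def)
  have "2 * w S * w (flip i S)
      \<le> (P S + P (flip i S)) * t + c * ((A S + A (flip i S)) / ln 2 - (P S + P (flip i S)) * s)"
    for S
    using two_sqrt_mult_le_tangent[OF _ _ \<open>0 \<le> c\<close> tangent, of "P S" "P (flip i S)"] w(1)
    by (simp add: P_def A_def real_sqrt_mult add.commute)
  then have "(\<Sum>S\<in>Pow {..<N}. 2 * w S * w (flip i S))
      \<le> (\<Sum>S\<in>Pow {..<N}. (P S + P (flip i S)) * t
        + c * ((A S + A (flip i S)) / ln 2 - (P S + P (flip i S)) * s))"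
    by (rule sum_mono)
  also have "\<dots> = (\<Sum>S\<in>Pow {..<N}. P S + P (flip i S)) * t
        + c * ((\<Sum>S\<in>Pow {..<N}. A S + A (flip i S)) / ln 2
               - (\<Sum>S\<in>Pow {..<N}. P S + P (flip i S)) * s)"
    by (simp add: sum.distrib sum_distrib_left sum_distrib_right sum_subtractf
        sum_divide_distrib[symmetric] algebra_simps)
  also have "\<dots> = 2 * (t + c * (cond_entropy {..<N} i P / ln 2 - s))"
    by (simp add: sum_P sum_A algebra_simps)
  finally show ?thesis
    by (simp add: sum_distrib_left[symmetric] mult.assoc P_def)
qed

lemma quadratic_form_Xop_real_le:
  assumes w: "\<And>S. 0 \<le> w S" "sqnorm N w = 1"
    and s: "0 < s" "s \<le> 1"
    and entropy_w: "entropy {..<N} (\<lambda>S. (w S)^2) \<le> ln 2 * real N * s"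
  shows "(\<Sum>S\<in>Pow {..<N}. w S * Xop_real N w S) \<le> real N * tau s"
proof -
  obtain c where "0 \<le> c" and tangent: "\<forall>q\<in>{0..1}. overlap q \<le> tau s + c * (bin_entropy q - s)"
    using tau_supporting_line[OF s] by blast
  define H where "H i = cond_entropy {..<N} i (\<lambda>S. (w S)^2)" for i
  have "(\<Sum>i<N. H i) \<le> ln 2 * real N * s"
    using sum_cond_entropy_le_entropy[of "{..<N}" "\<lambda>S. (w S)^2"] entropy_w by (simp add: H_def)
  then have "(\<Sum>i<N. H i) / ln 2 - real N * s \<le> 0"
    by (simp add: divide_le_eq mult.commute)
  with \<open>0 \<le> c\<close> have "c * ((\<Sum>i<N. H i) / ln 2 - real N * s) \<le> 0"
    by (rule mult_nonneg_nonpos)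
  moreover have "(\<Sum>S\<in>Pow {..<N}. w S * Xop_real N w S) \<le> (\<Sum>i<N. tau s + c * (H i / ln 2 - s))"
    unfolding sum_mult_Xop_real H_def
    by (intro sum_mono sum_mult_flip_le_tangent[OF w _ \<open>0 \<le> c\<close> tangent]) simp
  moreover have "(\<Sum>i<N. tau s + c * (H i / ln 2 - s))
      = real N * tau s + c * ((\<Sum>i<N. H i) / ln 2 - real N * s)"
    by (simp add: sum.distrib sum_distrib_left[symmetric] sum_subtractf sum_divide_distrib[symmetric])
  ultimately show ?thesis by linarith
qed

lemma entropy_mixture_le:
  assumes P: "\<And>S. 0 \<le> P S" "(\<Sum>S\<in>Pow {..<N}. P S) = 1"
    and Q: "\<And>S. 0 \<le> Q S" "(\<Sum>S\<in>Pow {..<N}. Q S) = 1"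
    and disjoint: "rsupport N P \<inter> rsupport N Q = {}"
  shows "entropy {..<N} (\<lambda>S. (P S + Q S) / 2)
    \<le> ln 2 + (ln (card (rsupport N P)) + ln (card (rsupport N Q))) / 2"
proof -
  define m n where "m = real (card (rsupport N P))" and "n = real (card (rsupport N Q))"
  have "0 < m" "0 < n" using card_rsupport_pos P(2) Q(2) by (auto simp: m_def n_def)
  have PQ: "P S = 0 \<or> Q S = 0" if "S \<in> Pow {..<N}" for S
    using disjoint that by (auto simp: rsupport_def)
  define R where "R S = (if P S \<noteq> 0 then 1 / (2 * m) else if Q S \<noteq> 0 then 1 / (2 * n) else 0)" for S
  have "(\<Sum>S\<in>Pow {..<N}. R S)
      \<le> (\<Sum>S\<in>Pow {..<N}. (if P S \<noteq> 0 then 1 / (2 * m) else 0) + (if Q S \<noteq> 0 then 1 / (2 * n) else 0))"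
    by (rule sum_mono) (use \<open>0 < m\<close> \<open>0 < n\<close> in \<open>auto simp: R_def\<close>)
  also have "\<dots> = 1"
    using \<open>0 < m\<close> \<open>0 < n\<close> by (simp add: sum.distrib sum_if_rsupport flip: m_def n_def)
  finally have sum_R: "(\<Sum>S\<in>Pow {..<N}. R S) \<le> 1" .
  have "- (\<Sum>S\<in>Pow {..<N}. (P S + Q S) / 2 * ln (R S))
      = (\<Sum>S\<in>Pow {..<N}. P S / 2 * ln (2 * m) + Q S / 2 * ln (2 * n))"
    unfolding sum_negf[symmetric]
    using PQ \<open>0 < m\<close> \<open>0 < n\<close> by (intro sum.cong) (auto simp: R_def ln_div)
  also have "\<dots> = ln (2 * m) / 2 + ln (2 * n) / 2"
    using P(2) Q(2)
    by (simp add: sum.distrib sum_distrib_right[symmetric] sum_divide_distrib[symmetric])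
  also have "\<dots> = ln 2 + (ln m + ln n) / 2"
    using \<open>0 < m\<close> \<open>0 < n\<close> by (simp add: ln_mult field_simps)
  finally have cross: "- (\<Sum>S\<in>Pow {..<N}. (P S + Q S) / 2 * ln (R S)) = ln 2 + (ln m + ln n) / 2" .
  have "entropy {..<N} (\<lambda>S. (P S + Q S) / 2) \<le> - (\<Sum>S\<in>Pow {..<N}. (P S + Q S) / 2 * ln (R S))"
  proof (rule entropy_le_cross_entropy)
    show "(\<Sum>S\<in>Pow {..<N}. (P S + Q S) / 2) = 1"
      using P(2) Q(2) by (simp add: sum.distrib sum_divide_distrib[symmetric])
    show "0 < R S" if "0 < (P S + Q S) / 2" for S
      using that \<open>0 < m\<close> \<open>0 < n\<close> by (auto simp: R_def)
  qed (use P Q sum_R \<open>0 < m\<close> \<open>0 < n\<close> in \<open>auto simp: R_def add_nonneg_nonneg\<close>)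
  then show ?thesis using cross by (simp add: m_def n_def)
qed

lemma sqnorm_add_disjoint:
  assumes "rsupport N f \<inter> rsupport N g = {}"
  shows "sqnorm N (\<lambda>S. f S + g S) = sqnorm N f + sqnorm N g"
proof -
  have "(f S + g S)^2 = (f S)^2 + (g S)^2" if "S \<in> Pow {..<N}" for S
    using assms that by (auto simp: rsupport_def power2_sum)
  then have "(\<Sum>S\<in>Pow {..<N}. (f S + g S)^2) = (\<Sum>S\<in>Pow {..<N}. (f S)^2 + (g S)^2)"
    by (rule sum.cong[OF refl])
  then show ?thesis
    by (simp add: sqnorm_def sum.distrib)
qed

lemma entropy_mean_sq_le:
  assumes "sqnorm N u = 1" "sqnorm N v = 1" "rsupport N u \<inter> rsupport N v = {}"
    and "real (card (rsupport N u)) \<le> a" "real (card (rsupport N v)) \<le> b"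
  shows "entropy {..<N} (\<lambda>S. ((u S + v S) / sqrt 2)^2) \<le> ln 2 * (1 + log 2 a / 2 + log 2 b / 2)"
proof -
  have "((u S + v S) / sqrt 2)^2 = ((u S)^2 + (v S)^2) / 2" if "S \<in> Pow {..<N}" for S
    using assms(3) that by (auto simp: rsupport_def power_divide power2_sum)
  then have "entropy {..<N} (\<lambda>S. ((u S + v S) / sqrt 2)^2)
      = entropy {..<N} (\<lambda>S. ((u S)^2 + (v S)^2) / 2)"
    by (rule entropy_cong)
  also have "\<dots> \<le> ln 2 + (ln (card (rsupport N u)) + ln (card (rsupport N v))) / 2"
    using entropy_mixture_le[where P="\<lambda>S. (u S)^2" and Q="\<lambda>S. (v S)^2"] assms(1-3)
    by (simp add: sqnorm_def)
  also have "\<dots> \<le> ln 2 + (ln a + ln b) / 2"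
  proof -
    have "0 < card (rsupport N u)" "0 < card (rsupport N v)"
      using card_rsupport_pos[of "\<lambda>S. (u S)^2" N] card_rsupport_pos[of "\<lambda>S. (v S)^2" N] assms(1,2)
      by (simp_all add: sqnorm_def)
    then have "ln (card (rsupport N u)) \<le> ln a" "ln (card (rsupport N v)) \<le> ln b"
      using assms(4,5) by (simp_all add: ln_le_cancel_iff)
    then show ?thesis by simp
  qed
  also have "\<dots> = ln 2 * (1 + log 2 a / 2 + log 2 b / 2)"
    by (simp add: log_def field_simps)
  finally show ?thesis .
qed

lemma sum_mult_Xop_real_le_mean:
  assumes "\<And>S. 0 \<le> u S" "\<And>S. 0 \<le> v S"
  defines "w \<equiv> \<lambda>S. (u S + v S) / sqrt 2"
  shows "(\<Sum>S\<in>Pow {..<N}. u S * Xop_real N v S) \<le> (\<Sum>S\<in>Pow {..<N}. w S * Xop_real N w S)"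
proof -
  have "2 * (w S * Xop_real N w S) = u S * Xop_real N u S + u S * Xop_real N v S
      + v S * Xop_real N u S + v S * Xop_real N v S" for S
    unfolding w_def Xop_real_divide Xop_real_add by (simp add: field_simps)
  then have "2 * (\<Sum>S\<in>Pow {..<N}. w S * Xop_real N w S)
      = (\<Sum>S\<in>Pow {..<N}. u S * Xop_real N u S) + (\<Sum>S\<in>Pow {..<N}. u S * Xop_real N v S)
        + (\<Sum>S\<in>Pow {..<N}. v S * Xop_real N u S) + (\<Sum>S\<in>Pow {..<N}. v S * Xop_real N v S)"
    by (simp only: sum_distrib_left sum.distrib)
  moreover have "(\<Sum>S\<in>Pow {..<N}. v S * Xop_real N u S) = (\<Sum>S\<in>Pow {..<N}. u S * Xop_real N v S)"
    by (simp add: Xop_real_symmetric mult.commute[of "v _"])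
  moreover have "0 \<le> (\<Sum>S\<in>Pow {..<N}. u S * Xop_real N u S)" "0 \<le> (\<Sum>S\<in>Pow {..<N}. v S * Xop_real N v S)"
    using assms by (auto intro!: sum_nonneg mult_nonneg_nonneg Xop_real_nonneg)
  ultimately show ?thesis by linarith
qed

text \<open>The unit vector \<open>(u + v) / sqrt 2\<close> has entropy at most \<open>N s\<close> bits, and its quadratic
  form dominates the bilinear form of \<open>u\<close> and \<open>v\<close>.\<close>
lemma bilinear_form_Xop_real_le:
  assumes u: "\<And>S. 0 \<le> u S" "sqnorm N u = 1" and v: "\<And>S. 0 \<le> v S" "sqnorm N v = 1"
    and disjoint: "rsupport N u \<inter> rsupport N v = {}"
    and card: "real (card (rsupport N u)) \<le> a" "real (card (rsupport N v)) \<le> b"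
    and s: "0 < s" "s \<le> 1" and budget: "1 + log 2 a / 2 + log 2 b / 2 \<le> real N * s"
  shows "(\<Sum>S\<in>Pow {..<N}. u S * Xop_real N v S) \<le> real N * tau s"
proof -
  define w where "w = (\<lambda>S. (u S + v S) / sqrt 2)"
  have "0 \<le> w S" for S
    using u(1) v(1) by (simp add: w_def)
  moreover have "sqnorm N w = 1"
    using u(2) v(2) disjoint by (simp add: w_def sqnorm_divide sqnorm_add_disjoint)
  moreover have "entropy {..<N} (\<lambda>S. (w S)^2) \<le> ln 2 * real N * s"
  proof -
    have "ln 2 * (1 + log 2 a / 2 + log 2 b / 2) \<le> ln 2 * (real N * s)"
      using budget by (intro mult_left_mono) auto
    from order_trans[OF entropy_mean_sq_le[OF u(2) v(2) disjoint card] this] show ?thesis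
      by (simp add: w_def mult.assoc)
  qed
  ultimately have "(\<Sum>S\<in>Pow {..<N}. w S * Xop_real N w S) \<le> real N * tau s"
    using quadratic_form_Xop_real_le s by blast
  moreover have "(\<Sum>S\<in>Pow {..<N}. u S * Xop_real N v S) \<le> (\<Sum>S\<in>Pow {..<N}. w S * Xop_real N w S)"
    unfolding w_def by (rule sum_mult_Xop_real_le_mean[of u v N, OF u(1) v(1)])
  ultimately show ?thesis by linarith
qed

definition has_parity :: "nat \<Rightarrow> bool \<Rightarrow> (nat set \<Rightarrow> real) \<Rightarrow> bool" where
  "has_parity N e f \<longleftrightarrow> (\<forall>S\<in>rsupport N f. even (card S) = e)"

lemma Xop_real_neq_0_imp: "Xop_real N f S \<noteq> 0 \<Longrightarrow> \<exists>i<N. f (flip i S) \<noteq> 0"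
  by (metis (no_types, lifting) Xop_real_def lessThan_iff sum.neutral)

lemma has_parity_Xop_real: "has_parity N e f \<Longrightarrow> has_parity N (\<not> e) (Xop_real N f)"
  unfolding has_parity_def
proof
  fix S assume parity: "\<forall>S\<in>rsupport N f. even (card S) = e" and "S \<in> rsupport N (Xop_real N f)"
  then have S: "S \<in> Pow {..<N}" and "Xop_real N f S \<noteq> 0" by (auto simp: rsupport_def)
  then obtain i where "i < N" "f (flip i S) \<noteq> 0" using Xop_real_neq_0_imp by blast
  with S have "flip i S \<in> rsupport N f" by (simp add: rsupport_def)
  with parity have "even (card (flip i S)) = e" by blast
  moreover have "finite S" using S finite_subset by auto
  ultimately show "even (card S) = (\<not> e)" using even_card_flip by auto
qed

lemma card_rsupport_Xop_real: "card (rsupport N (Xop_real N f)) \<le> N * card (rsupport N f)"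
proof -
  have "rsupport N (Xop_real N f) \<subseteq> (\<Union>i<N. flip i ` rsupport N f)"
  proof
    fix S assume S: "S \<in> rsupport N (Xop_real N f)"
    then have "Xop_real N f S \<noteq> 0" by (simp add: rsupport_def)
    then obtain i where "i < N" "f (flip i S) \<noteq> 0"
      using Xop_real_neq_0_imp by blast
    with S have "flip i S \<in> rsupport N f" by (simp add: rsupport_def)
    with \<open>i < N\<close> show "S \<in> (\<Union>i<N. flip i ` rsupport N f)"
      by (auto intro!: bexI[of _ i] image_eqI[of _ _ "flip i S"])
  qed
  then have "card (rsupport N (Xop_real N f)) \<le> card (\<Union>i<N. flip i ` rsupport N f)"
    by (intro card_mono) auto
  also have "\<dots> \<le> (\<Sum>i<N. card (flip i ` rsupport N f))"
    by (rule card_UN_le) simp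
  also have "\<dots> \<le> (\<Sum>i<N. card (rsupport N f))"
    by (intro sum_mono card_image_le) simp
  finally show ?thesis by simp
qed

lemma rsupport_disjoint_if_parity:
  "has_parity N e f \<Longrightarrow> has_parity N (\<not> e) g \<Longrightarrow> rsupport N f \<inter> rsupport N g = {}"
  by (auto simp: has_parity_def)

lemma sqnorm_Xop_real_eq_0: "sqnorm N f = 0 \<Longrightarrow> sqnorm N (Xop_real N f) = 0"
  by (auto simp: sqnorm_eq_0_iff Xop_real_def intro!: sum.neutral)

lemma bilinear_form_Xop_real_le_sqnorm:
  assumes "\<And>S. 0 \<le> u S" "\<And>S. 0 \<le> v S" "rsupport N u \<inter> rsupport N v = {}"
    and "real (card (rsupport N u)) \<le> a" "real (card (rsupport N v)) \<le> b"
    and "0 < s" "s \<le> 1" "1 + log 2 a / 2 + log 2 b / 2 \<le> real N * s"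
  shows "(\<Sum>S\<in>Pow {..<N}. u S * Xop_real N v S)
    \<le> real N * tau s * sqrt (sqnorm N u) * sqrt (sqnorm N v)"
proof (cases "sqnorm N u = 0 \<or> sqnorm N v = 0")
  case True
  then have "(\<Sum>S\<in>Pow {..<N}. u S * Xop_real N v S) = 0"
    using sqnorm_Xop_real_eq_0[of N v] by (auto simp: sqnorm_eq_0_iff intro!: sum.neutral)
  then show ?thesis using True by auto
next
  case False
  define m n where "m = sqrt (sqnorm N u)" and "n = sqrt (sqnorm N v)"
  have "0 < m" "0 < n"
    using False sqnorm_nonneg[of N u] sqnorm_nonneg[of N v] by (auto simp: m_def n_def)
  have "(\<Sum>S\<in>Pow {..<N}. u S / m * Xop_real N (\<lambda>S. v S / n) S) \<le> real N * tau s"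
  proof (rule bilinear_form_Xop_real_le)
    show "sqnorm N (\<lambda>S. u S / m) = 1" "sqnorm N (\<lambda>S. v S / n) = 1"
      using False sqnorm_nonneg[of N u] sqnorm_nonneg[of N v] by (simp_all add: m_def n_def sqnorm_divide)
  qed (use assms \<open>0 < m\<close> \<open>0 < n\<close> in \<open>simp_all add: rsupport_divide\<close>)
  moreover have "(\<Sum>S\<in>Pow {..<N}. u S / m * Xop_real N (\<lambda>S. v S / n) S)
      = (\<Sum>S\<in>Pow {..<N}. u S * Xop_real N v S) / (m * n)"
    by (simp add: Xop_real_divide sum_divide_distrib)
  ultimately show ?thesis
    using \<open>0 < m\<close> \<open>0 < n\<close> by (simp add: divide_le_eq m_def n_def mult_ac)
qed

text \<open>\<open>|X f|\<^sup>2 = \<langle>X f, X f\<rangle>\<close> is the bilinear form of \<open>X f\<close> and \<open>f\<close>, whose supports are disjoint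
  by parity.\<close>
lemma sqnorm_Xop_real_le:
  assumes f: "\<And>S. 0 \<le> f S" "has_parity N e f"
    and card_f: "real (card (rsupport N f)) \<le> a"
    and card_Xf: "real (card (rsupport N (Xop_real N f))) \<le> b"
    and s: "0 < s" "s \<le> 1" and budget: "1 + log 2 a / 2 + log 2 b / 2 \<le> real N * s"
  shows "sqnorm N (Xop_real N f) \<le> (real N * tau s)^2 * sqnorm N f"
proof -
  define m n where "m = sqrt (sqnorm N (Xop_real N f))" and "n = sqrt (sqnorm N f)"
  have "0 \<le> m" "0 \<le> n" "sqnorm N (Xop_real N f) = m^2" "sqnorm N f = n^2"
    using sqnorm_nonneg by (simp_all add: m_def n_def)
  have "rsupport N (Xop_real N f) \<inter> rsupport N f = {}"
    using rsupport_disjoint_if_parity[OF f(2) has_parity_Xop_real[OF f(2)]] by blast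
  then have "m^2 \<le> real N * tau s * m * n"
    using bilinear_form_Xop_real_le_sqnorm[OF Xop_real_nonneg[OF f(1)] f(1) _ card_Xf card_f s]
      budget \<open>sqnorm N (Xop_real N f) = m^2\<close>
    by (simp add: sqnorm_def power2_eq_square m_def n_def add_ac)
  then have "m \<le> real N * tau s * n"
    using \<open>0 \<le> m\<close> \<open>0 \<le> n\<close> tau_nonneg[of s] s
    by (cases "m = 0") (simp_all add: power2_eq_square mult_ac)
  then have "m^2 \<le> (real N * tau s * n)^2"
    using \<open>0 \<le> m\<close> by (rule power_mono)
  then show ?thesis
    by (simp add: \<open>sqnorm N (Xop_real N f) = m^2\<close> \<open>sqnorm N f = n^2\<close> power_mult_distrib)
qed

lemma Xop_real_funpow_nonneg: "(\<And>S. 0 \<le> f S) \<Longrightarrow> 0 \<le> (Xop_real N ^^ k) f S"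
  by (induction k arbitrary: S) (simp_all add: Xop_real_nonneg)

lemma has_parity_Xop_real_funpow:
  "has_parity N e f \<Longrightarrow> has_parity N (e \<longleftrightarrow> even k) ((Xop_real N ^^ k) f)"
  by (induction k) (auto dest: has_parity_Xop_real)

lemma card_rsupport_Xop_real_funpow:
  assumes "card (rsupport N f) \<le> n0"
  shows "real (card (rsupport N ((Xop_real N ^^ k) f))) \<le> real n0 * real N ^ k"
proof (induction k)
  case (Suc k)
  have "real (card (rsupport N ((Xop_real N ^^ Suc k) f)))
      \<le> real N * real (card (rsupport N ((Xop_real N ^^ k) f)))"
    using card_rsupport_Xop_real[of N "(Xop_real N ^^ k) f"] by (simp flip: of_nat_mult)
  also have "\<dots> \<le> real n0 * real N ^ Suc k"
    using Suc.IH by (simp add: mult_left_mono mult_ac)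
  finally show ?case .
qed (use assms in simp)

lemma Xop_real_funpow_add:
  "(Xop_real N ^^ k) (\<lambda>S. f S + g S) = (\<lambda>S. (Xop_real N ^^ k) f S + (Xop_real N ^^ k) g S)"
  by (induction k) (simp_all add: Xop_real_add)

text \<open>\<open>N * sigma n0 N k\<close> is the entropy budget in bits of the \<open>k\<close>-th application of \<open>X\<close>, whose
  input and output are supported on at most \<open>n0 N\<^sup>k\<close> and \<open>n0 N\<^sup>k\<^sup>+\<^sup>1\<close> basis states.\<close>
definition sigma :: "nat \<Rightarrow> nat \<Rightarrow> nat \<Rightarrow> real" where
  "sigma n0 N k = (log 2 (real n0) + (real k + 1/2) * log 2 (real N) + 1) / real N"

lemma sigma_pos: "0 < n0 \<Longrightarrow> 0 < N \<Longrightarrow> 0 < sigma n0 N k"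
  unfolding sigma_def by (intro divide_pos_pos add_nonneg_pos add_nonneg_nonneg) auto

lemma sigma_mono: "0 < N \<Longrightarrow> k \<le> l \<Longrightarrow> sigma n0 N k \<le> sigma n0 N l"
  unfolding sigma_def by (intro divide_right_mono add_right_mono add_left_mono mult_right_mono) auto

lemma real_N_mult_sigma:
  assumes "0 < n0" "0 < N"
  shows "real N * sigma n0 N k
    = 1 + log 2 (real n0 * real N ^ k) / 2 + log 2 (real n0 * real N ^ Suc k) / 2"
  using assms by (simp add: sigma_def log_mult_pos log_nat_power field_simps del: power_Suc)

lemma sqnorm_Xop_real_funpow_le_parity:
  assumes "0 < N" "0 < n0"
    and f: "\<And>S. 0 \<le> f S" "has_parity N e f" "card (rsupport N f) \<le> n0"
    and "\<forall>k<K. sigma n0 N k \<le> 1"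
  shows "sqnorm N ((Xop_real N ^^ K) f) \<le> (\<Prod>k<K. (real N * tau (sigma n0 N k))^2) * sqnorm N f"
  using assms(6)
proof (induction K)
  case (Suc K)
  let ?g = "(Xop_real N ^^ K) f"
  have "real (card (rsupport N ?g)) \<le> real n0 * real N ^ K"
    "real (card (rsupport N (Xop_real N ?g))) \<le> real n0 * real N ^ Suc K"
    using card_rsupport_Xop_real_funpow[OF f(3), of K] card_rsupport_Xop_real_funpow[OF f(3), of "Suc K"]
    by simp_all
  then have "sqnorm N (Xop_real N ?g) \<le> (real N * tau (sigma n0 N K))^2 * sqnorm N ?g"
    using Suc.prems assms(1,2) f(1,2)
    by (intro sqnorm_Xop_real_le[where e="e \<longleftrightarrow> even K"])
      (auto simp: real_N_mult_sigma sigma_pos Xop_real_funpow_nonneg has_parity_Xop_real_funpow)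
  also have "\<dots> \<le> (real N * tau (sigma n0 N K))^2
      * ((\<Prod>k<K. (real N * tau (sigma n0 N k))^2) * sqnorm N f)"
    using Suc by (intro mult_left_mono) auto
  finally show ?case by (simp add: mult_ac)
qed simp

lemma sqnorm_Xop_real_funpow_le:
  assumes "0 < N" "0 < n0"
    and f: "\<And>S. 0 \<le> f S" "card (rsupport N f) \<le> n0"
    and sigma: "\<forall>k<K. sigma n0 N k \<le> 1"
  shows "sqnorm N ((Xop_real N ^^ K) f) \<le> (\<Prod>k<K. (real N * tau (sigma n0 N k))^2) * sqnorm N f"
proof -
  let ?X = "Xop_real N ^^ K" and ?c = "\<Prod>k<K. (real N * tau (sigma n0 N k))^2"
  define f_even f_odd where "f_even S = (if even (card S) then f S else 0)"
    and "f_odd S = (if even (card S) then 0 else f S)" for S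
  have parity: "has_parity N True f_even" "has_parity N False f_odd"
    by (auto simp: has_parity_def rsupport_def f_even_def f_odd_def)
  have "rsupport N f_even \<subseteq> rsupport N f" "rsupport N f_odd \<subseteq> rsupport N f"
    by (auto simp: rsupport_def f_even_def f_odd_def)
  then have card: "card (rsupport N f_even) \<le> n0" "card (rsupport N f_odd) \<le> n0"
    using f(2) card_mono[OF finite_rsupport] by (metis le_trans)+
  have nonneg: "0 \<le> f_even S" "0 \<le> f_odd S" for S
    using f(1) by (simp_all add: f_even_def f_odd_def)
  have split: "f = (\<lambda>S. f_even S + f_odd S)"
    by (auto simp: f_even_def f_odd_def)
  have "rsupport N (?X f_even) \<inter> rsupport N (?X f_odd) = {}"
    using has_parity_Xop_real_funpow[OF parity(1)] has_parity_Xop_real_funpow[OF parity(2)]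
    by (auto simp: has_parity_def)
  then have "sqnorm N (?X f) = sqnorm N (?X f_even) + sqnorm N (?X f_odd)"
    by (simp add: split Xop_real_funpow_add sqnorm_add_disjoint)
  also have "\<dots> \<le> ?c * sqnorm N f_even + ?c * sqnorm N f_odd"
    using sqnorm_Xop_real_funpow_le_parity[OF assms(1,2) nonneg(1) parity(1) card(1) sigma]
      sqnorm_Xop_real_funpow_le_parity[OF assms(1,2) nonneg(2) parity(2) card(2) sigma]
    by (rule add_mono)
  also have "\<dots> = ?c * sqnorm N f"
    using rsupport_disjoint_if_parity[of N True f_even f_odd] parity
    by (simp add: split sqnorm_add_disjoint distrib_left)
  finally show ?thesis .
qed

section \<open>Complex amplitudes\<close>

lemma Xop_eq_sum_flip: "Xop N f S = (\<Sum>i<N. f (flip i S))"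
  by (simp add: Xop_def flip_def)

lemma XN_funpow: "(XN N ^^ k) \<psi> S = (Xop N ^^ k) \<psi> S / of_nat N ^ k"
proof (induction k arbitrary: S)
  case (Suc k)
  then show ?case
    by (simp add: XN_def Xop_eq_sum_flip sum_divide_distrib[symmetric] mult.commute)
qed simp

lemma cmod_Xop_funpow_le: "cmod ((Xop N ^^ k) \<psi> S) \<le> (Xop_real N ^^ k) (\<lambda>S. cmod (\<psi> S)) S"
proof (induction k arbitrary: S)
  case (Suc k)
  have "cmod ((Xop N ^^ Suc k) \<psi> S) \<le> (\<Sum>i<N. cmod ((Xop N ^^ k) \<psi> (flip i S)))"
    by (simp add: Xop_eq_sum_flip norm_sum)
  also have "\<dots> \<le> (\<Sum>i<N. (Xop_real N ^^ k) (\<lambda>S. cmod (\<psi> S)) (flip i S))"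
    by (intro sum_mono Suc.IH)
  also have "\<dots> = Xop_real N ((Xop_real N ^^ k) (\<lambda>S. cmod (\<psi> S))) S"
    by (rule Xop_real_def[symmetric])
  finally show ?case by simp
qed simp

lemma qinner_XN: "qinner N f (XN N g) = qinner N (XN N f) g"
proof -
  have "qinner N f (XN N g) = (\<Sum>i<N. \<Sum>S\<in>Pow {..<N}. cnj (f S) * g (flip i S)) / of_nat N"
    by (simp add: qinner_def XN_def basis_def Xop_eq_sum_flip sum_divide_distrib[symmetric]
        sum_distrib_left sum.swap[of _ "{..<N}"])
  also have "\<dots> = (\<Sum>i<N. \<Sum>S\<in>Pow {..<N}. cnj (f (flip i S)) * g S) / of_nat N"
  proof -
    have "(\<Sum>S\<in>Pow {..<N}. cnj (f S) * g (flip i S)) = (\<Sum>S\<in>Pow {..<N}. cnj (f (flip i S)) * g S)"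
      if "i < N" for i
      using sum_Pow_flip[of i "{..<N}" "\<lambda>S. cnj (f (flip i S)) * g S"] that by simp
    then show ?thesis by simp
  qed
  also have "\<dots> = qinner N (XN N f) g"
    by (simp add: qinner_def XN_def basis_def Xop_eq_sum_flip sum_divide_distrib[symmetric]
        sum_distrib_right sum.swap[of _ "{..<N}"])
  finally show ?thesis .
qed

lemma qinner_XN_funpow:
  "qinner N f ((XN N ^^ (a + b)) g) = qinner N ((XN N ^^ a) f) ((XN N ^^ b) g)"
proof (induction a arbitrary: f)
  case (Suc a)
  have "qinner N f ((XN N ^^ (Suc a + b)) g) = qinner N (XN N f) ((XN N ^^ (a + b)) g)"
    by (simp add: qinner_XN)
  also have "\<dots> = qinner N ((XN N ^^ Suc a) f) ((XN N ^^ b) g)"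
    by (simp add: Suc.IH funpow_Suc_right del: funpow.simps)
  finally show ?case .
qed simp

lemma qinner_self: "qinner N h h = complex_of_real (\<Sum>S\<in>basis N. (cmod (h S))^2)"
  unfolding qinner_def of_real_sum
  by (intro sum.cong refl) (subst complex_norm_square, simp add: mult.commute)

lemma card_qsupport_pos: "qnorm N \<psi> = 1 \<Longrightarrow> 0 < card (qsupport N \<psi>)"
  by (rule ccontr) (auto simp: qnorm_def qsupport_def basis_def)

lemma sum_cmod_XN_funpow_le:
  assumes "0 < N" "qnorm N \<psi> = 1" "card (qsupport N \<psi>) \<le> n0" "\<forall>k<K. sigma n0 N k \<le> 1"
  shows "(\<Sum>S\<in>basis N. (cmod ((XN N ^^ K) \<psi> S))^2) \<le> (\<Prod>k<K. (tau (sigma n0 N k))^2)"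
proof -
  define f where "f S = cmod (\<psi> S)" for S
  have "0 < n0" using card_qsupport_pos[OF assms(2)] assms(3) by linarith
  have "sqnorm N f = 1"
    using assms(2) by (simp add: qnorm_def sqnorm_def basis_def f_def)
  moreover have "card (rsupport N f) \<le> n0"
    using assms(3) by (simp add: rsupport_def qsupport_def basis_def f_def)
  ultimately have bound: "sqnorm N ((Xop_real N ^^ K) f) \<le> (\<Prod>k<K. (real N * tau (sigma n0 N k))^2)"
    using sqnorm_Xop_real_funpow_le[OF assms(1) \<open>0 < n0\<close> _ _ assms(4), of f] by (simp add: f_def)
  have "(\<Sum>S\<in>basis N. (cmod ((XN N ^^ K) \<psi> S))^2)
      = (\<Sum>S\<in>basis N. (cmod ((Xop N ^^ K) \<psi> S))^2) / real N ^ (2 * K)"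
    by (simp add: XN_funpow norm_divide norm_power power_divide sum_divide_distrib
        power_mult[symmetric] mult.commute)
  also have "\<dots> \<le> sqnorm N ((Xop_real N ^^ K) f) / real N ^ (2 * K)"
    unfolding sqnorm_def basis_def f_def
    by (intro divide_right_mono sum_mono power_mono cmod_Xop_funpow_le) auto
  also have "\<dots> \<le> (\<Prod>k<K. (real N * tau (sigma n0 N k))^2) / real N ^ (2 * K)"
    using bound by (simp add: divide_right_mono)
  also have "\<dots> = (\<Prod>k<K. (tau (sigma n0 N k))^2)"
    using assms(1)
    by (simp add: prod.distrib power_mult_distrib power_mult[symmetric] mult.commute)
  finally show ?thesis .
qed

lemma qinner_XN_funpow_double:
  "qinner N \<psi> ((XN N ^^ (2 * K)) \<psi>) = complex_of_real (\<Sum>S\<in>basis N. (cmod ((XN N ^^ K) \<psi> S))^2)"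
  using qinner_XN_funpow[of N \<psi> K K \<psi>] by (simp add: mult_2 qinner_self)

lemma qnorm_XN_funpow_le:
  assumes "0 < N" "qnorm N \<psi> = 1" "card (qsupport N \<psi>) \<le> n0" "sigma n0 N K \<le> 1"
  shows "qnorm N ((XN N ^^ K) \<psi>) \<le> tau (sigma n0 N K) ^ K"
proof -
  have "0 < n0" using card_qsupport_pos[OF assms(2)] assms(3) by linarith
  have sigma_k: "0 < sigma n0 N k" "sigma n0 N k \<le> sigma n0 N K" if "k < K" for k
    using sigma_pos[OF \<open>0 < n0\<close> assms(1)] sigma_mono[OF assms(1)] that by auto
  have tau_k: "0 \<le> tau (sigma n0 N k)" "tau (sigma n0 N k) \<le> tau (sigma n0 N K)" if "k < K" for k
    using tau_nonneg tau_mono sigma_k[OF that] assms(4) by auto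
  have "\<forall>k<K. sigma n0 N k \<le> 1"
    using sigma_k(2) assms(4) by (meson order_trans)
  then have "qnorm N ((XN N ^^ K) \<psi>) \<le> sqrt (\<Prod>k<K. (tau (sigma n0 N k))^2)"
    unfolding qnorm_def by (intro real_sqrt_le_mono sum_cmod_XN_funpow_le[OF assms(1-3)])
  also have "\<dots> = (\<Prod>k<K. tau (sigma n0 N k))"
    using prod_nonneg[of "{..<K}" "\<lambda>k. tau (sigma n0 N k)"] tau_k(1)
    by (simp add: prod_power_distrib[symmetric])
  also have "\<dots> \<le> (\<Prod>k<K. tau (sigma n0 N K))"
    using tau_k by (intro prod_mono) auto
  finally show ?thesis by simp
qed

theorem mainTheorem6:
  fixes N K n0 :: nat and \<psi> :: qstate
  assumes "N > 0" and "K > 0"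
    and "qnorm N \<psi> = 1"
    and "card (qsupport N \<psi>) \<le> n0"
  shows "((\<forall>i<K. 0 \<le> (log 2 (real n0) + (real i + 1/2) * log 2 (real N) + 1) / real N
                 \<and> (log 2 (real n0) + (real i + 1/2) * log 2 (real N) + 1) / real N \<le> 1) \<longrightarrow>
           Im (qinner N \<psi> ((XN N ^^ (2*K)) \<psi>)) = 0 \<and>
           Re (qinner N \<psi> ((XN N ^^ (2*K)) \<psi>))
             \<le> (\<Prod>i<K. (tau ((log 2 (real n0) + (real i + 1/2) * log 2 (real N) + 1) / real N))\<^sup>2))
       \<and> ((0 \<le> log 2 (real n0) / real N + ((real K + 1/2) * log 2 (real N) + 1) / real N
            \<and> log 2 (real n0) / real N + ((real K + 1/2) * log 2 (real N) + 1) / real N \<le> 1) \<longrightarrow>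
           qnorm N ((XN N ^^ K) \<psi>)
             \<le> (tau (log 2 (real n0) / real N + ((real K + 1/2) * log 2 (real N) + 1) / real N)) ^ K)"
proof -
  have "(\<forall>i<K. sigma n0 N i \<le> 1) \<longrightarrow>
      Im (qinner N \<psi> ((XN N ^^ (2*K)) \<psi>)) = 0 \<and>
      Re (qinner N \<psi> ((XN N ^^ (2*K)) \<psi>)) \<le> (\<Prod>i<K. (tau (sigma n0 N i))\<^sup>2)"
    using sum_cmod_XN_funpow_le[OF assms(1,3,4)] by (simp add: qinner_XN_funpow_double)
  moreover have "sigma n0 N K \<le> 1 \<longrightarrow> qnorm N ((XN N ^^ K) \<psi>) \<le> tau (sigma n0 N K) ^ K"
    using qnorm_XN_funpow_le[OF assms(1,3,4)] by blast
  moreover have "log 2 (real n0) / real N + ((real K + 1/2) * log 2 (real N) + 1) / real N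
      = sigma n0 N K"
    by (simp add: sigma_def add_divide_distrib)
  ultimately show ?thesis
    unfolding sigma_def[symmetric] by auto
qed

end
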